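(* Let $X,Y,\tilde X,\tilde Y$ be cellular spaces with $X$ and $\tilde X$ compact, let $r\ge0$, let $k\colon\tilde X\to X$ and $h\colon Y\to\tilde Y$ be maps, and let $a,b\colon X\to Y$ be maps with $a\overset{r}{\approx}b$. Then $a\circ k\overset{r}{\approx}b\circ k$ (as maps $\tilde X\to Y$) and $h\circ a\overset{r}{\approx}h\circ b$ (as maps $X\to\tilde Y$).
   Context: Cellular space = based CW complex; maps based. Strong similarity: $\langle W\rangle$ = free abelian group on a set $W$. $Y^X$ = based maps (compact-open), based at the constant map; $Y^X_a$ = path component of $a$; $V\mapsto V|_R$ restriction; $\mathcal F_n(X)$ = finite $R\subseteq X$ containing the basepoint with $|R|\le n+1$; $\langle Y^X\rangle^{(s)}=\{V:V|_R=0\ \forall R\in\mathcal F_{s-1}(X)\}$. For unbased $U,V$: $V^{(U)}$ = unbased maps; $\Xi^U(v)$ = constant map at $v$; for $U=\coprod_iU_i$ the combining product $\boxed{\sqcup}_i\langle w_i\rangle=\langle w\rangle$, $w|_{U_i}=w_i$, multilinear. For nonempty finite $E$: simplex $\Delta E$, faces $\Delta F$; layouts = sets $A$ of pairwise disjoint nonempty subsets; $\Delta[A]=\coprod_{F\in A}\Delta F$; $S\in\langle V^{(\Delta E)}\rangle$ fissile if $S|_{\Delta[A]}=\boxed{\sqcup}_{F\in A}S|_{\Delta F}$ for all layouts. $U\wr X=(U\times X)/(U\times\{x_0\})$, $\#^X(w)(u\wr x)=w(u)(x)$, $\langle (Y^X)^{(U)}\rangle^{(s)}_X=\langle\#^X\rangle^{-1}\langle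 Y^{U\wr X}\rangle^{(s)}$. $a\overset{r}{\approx}b$ iff for each nonempty finite $E$ there is a fissile $S\in\langle (Y^X_a)^{(\Delta E)}\rangle$ with $\langle\Xi^{\Delta E}(b)\rangle-S\in\langle (Y^X)^{(\Delta E)}\rangle^{(r+1)}_X$. *)

theory Defs
  imports "HOL-Analysis.Analysis" "HOL-Library.Poly_Mapping"
begin

definition RN :: "(nat \<Rightarrow> real) topology" where
  "RN = product_topology (\<lambda>_. euclideanreal) UNIV"

definition disc :: "nat \<Rightarrow> (nat \<Rightarrow> real) set" where
  "disc n = {x. (\<forall>i\<ge>n. x i = 0) \<and> (\<Sum>i<n. (x i)^2) \<le> 1}"

definition open_disc :: "nat \<Rightarrow> (nat \<Rightarrow> real) set" where
  "open_disc n = {x. (\<forall>i\<ge>n. x i = 0) \<and> (\<Sum>i<n. (x i)^2) < 1}"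

definition sphere_n :: "nat \<Rightarrow> (nat \<Rightarrow> real) set" where
  "sphere_n n = {x. (\<forall>i\<ge>n. x i = 0) \<and> (\<Sum>i<n. (x i)^2) = 1}"

section \<open>CW complexes (Hatcher, Prop. A.2 characterisation) and cellular spaces\<close>

definition cw_structure ::
  "'a topology \<Rightarrow> 'a set set \<Rightarrow> ('a set \<Rightarrow> nat) \<Rightarrow> ('a set \<Rightarrow> (nat \<Rightarrow> real) \<Rightarrow> 'a) \<Rightarrow> bool" where
  "cw_structure X C cdim chi \<longleftrightarrow>
     Hausdorff_space X \<and> pairwise disjnt C \<and> {} \<notin> C \<and> \<Union>C = topspace X \<and>
     (\<forall>e\<in>C. continuous_map (subtopology RN (disc (cdim e))) X (chi e) \<and>
             chi e ` open_disc (cdim e) = e \<and>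
             homeomorphic_map (subtopology RN (open_disc (cdim e))) (subtopology X e) (chi e) \<and>
             (\<exists>D. finite D \<and> D \<subseteq> C \<and> (\<forall>d\<in>D. cdim d < cdim e) \<and>
                  chi e ` sphere_n (cdim e) \<subseteq> \<Union>D)) \<and>
     (\<forall>S. S \<subseteq> topspace X \<longrightarrow>
          (closedin X S \<longleftrightarrow> (\<forall>e\<in>C. closedin X (S \<inter> X closure_of e))))"

definition cellular_space :: "'a topology \<Rightarrow> 'a \<Rightarrow> bool" where
  "cellular_space X x0 \<longleftrightarrow> (\<exists>C cdim chi. cw_structure X C cdim chi \<and> {x0} \<in> C)"

definition based_maps :: "'x topology \<Rightarrow> 'x \<Rightarrow> 'y topology \<Rightarrow> 'y \<Rightarrow> ('x \<Rightarrow> 'y) set" where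
  "based_maps X x0 Y y0 = {f. continuous_map X Y f \<and> f x0 = y0 \<and> f \<in> extensional (topspace X)}"

definition unbased_maps :: "'u topology \<Rightarrow> 'v topology \<Rightarrow> ('u \<Rightarrow> 'v) set" where
  "unbased_maps U V = {w. continuous_map U V w \<and> w \<in> extensional (topspace U)}"

definition CO :: "'x topology \<Rightarrow> 'x \<Rightarrow> 'y topology \<Rightarrow> 'y \<Rightarrow> ('x \<Rightarrow> 'y) topology" where
  "CO X x0 Y y0 = subtopology
     (topology_generated_by {{f. f ` K \<subseteq> U} | K U. compactin X K \<and> openin Y U})
     (based_maps X x0 Y y0)"

definition free_on :: "'a set \<Rightarrow> ('a \<Rightarrow>\<^sub>0 int) set" where
  "free_on W = {V. Poly_Mapping.keys V \<subseteq> W}"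

definition restr_frag :: "'x set \<Rightarrow> (('x \<Rightarrow> 'y) \<Rightarrow>\<^sub>0 int) \<Rightarrow> (('x \<Rightarrow> 'y) \<Rightarrow>\<^sub>0 int)" where
  "restr_frag R V = frag_extend (\<lambda>f. frag_of (restrict f R)) V"

definition Fsets :: "'x topology \<Rightarrow> 'x \<Rightarrow> nat \<Rightarrow> 'x set set" where
  "Fsets X x0 n = {R. finite R \<and> R \<subseteq> topspace X \<and> x0 \<in> R \<and> card R \<le> Suc n}"

definition filt :: "'x topology \<Rightarrow> 'x \<Rightarrow> 'y topology \<Rightarrow> 'y \<Rightarrow> nat \<Rightarrow> (('x \<Rightarrow> 'y) \<Rightarrow>\<^sub>0 int) set" where
  "filt X x0 Y y0 s = {V \<in> free_on (based_maps X x0 Y y0). \<forall>R\<in>Fsets X x0 (s - 1). restr_frag R V = 0}"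

definition dsimplex :: "nat set \<Rightarrow> (nat \<Rightarrow> real) set" where
  "dsimplex E = {t. (\<forall>i. 0 \<le> t i) \<and> (\<forall>i. i \<notin> E \<longrightarrow> t i = 0) \<and> sum t E = 1}"

definition dsimplex_top :: "nat set \<Rightarrow> (nat \<Rightarrow> real) topology" where
  "dsimplex_top E = subtopology RN (dsimplex E)"

definition layout :: "nat set \<Rightarrow> nat set set \<Rightarrow> bool" where
  "layout E A \<longleftrightarrow> A \<subseteq> Pow E \<and> {} \<notin> A \<and> pairwise disjnt A"

text \<open>Delta[A] = disjoint union of the faces Delta F, realised inside Delta E
  (faces on disjoint vertex sets are disjoint closed subsets).\<close>
definition layout_space :: "nat set set \<Rightarrow> (nat \<Rightarrow> real) set" where
  "layout_space A = (\<Union>F\<in>A. dsimplex F)"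

definition glue :: "nat set set \<Rightarrow> (nat set \<Rightarrow> (nat \<Rightarrow> real) \<Rightarrow> 'v) \<Rightarrow> (nat \<Rightarrow> real) \<Rightarrow> 'v" where
  "glue A g = (\<lambda>t. if \<exists>F\<in>A. t \<in> dsimplex F then g (THE F. F \<in> A \<and> t \<in> dsimplex F) t else undefined)"

text \<open>Combining product: the multilinear extension of
  (w_F)_{F in A} |-> [w], w restricted to Delta F equal to w_F.\<close>
definition comb_prod ::
  "nat set set \<Rightarrow> (nat set \<Rightarrow> (((nat \<Rightarrow> real) \<Rightarrow> 'v) \<Rightarrow>\<^sub>0 int)) \<Rightarrow> (((nat \<Rightarrow> real) \<Rightarrow> 'v) \<Rightarrow>\<^sub>0 int)" where
  "comb_prod A c = (\<Sum>g \<in> PiE A (\<lambda>F. Poly_Mapping.keys (c F)).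
      frag_cmul (\<Prod>F\<in>A. poly_mapping.lookup (c F) (g F)) (frag_of (glue A g)))"

definition fissile :: "nat set \<Rightarrow> (((nat \<Rightarrow> real) \<Rightarrow> 'v) \<Rightarrow>\<^sub>0 int) \<Rightarrow> bool" where
  "fissile E S \<longleftrightarrow> (\<forall>A. layout E A \<longrightarrow>
      restr_frag (layout_space A) S = comb_prod A (\<lambda>F. restr_frag (dsimplex F) S))"

definition quot_top :: "'a topology \<Rightarrow> ('a \<Rightarrow> 'b) \<Rightarrow> 'b topology" where
  "quot_top X q = topology (\<lambda>S. S \<subseteq> q ` topspace X \<and> openin X {x \<in> topspace X. q x \<in> S})"

text \<open>Points of U wr X: None is the basepoint (the collapsed U x {x0}); Some (u,x), x ~= x0.\<close>
definition wr_pt :: "'x \<Rightarrow> 'u \<times> 'x \<Rightarrow> ('u \<times> 'x) option" where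
  "wr_pt x0 p = (if snd p = x0 then None else Some p)"

definition wr_top :: "'u topology \<Rightarrow> 'x topology \<Rightarrow> 'x \<Rightarrow> ('u \<times> 'x) option topology" where
  "wr_top U X x0 = quot_top (prod_topology U X) (wr_pt x0)"

definition sharp :: "'u topology \<Rightarrow> 'x topology \<Rightarrow> 'x \<Rightarrow> 'y \<Rightarrow> ('u \<Rightarrow> 'x \<Rightarrow> 'y) \<Rightarrow> ('u \<times> 'x) option \<Rightarrow> 'y" where
  "sharp U X x0 y0 w = restrict (\<lambda>p. case p of None \<Rightarrow> y0 | Some (u, x) \<Rightarrow> w u x) (topspace (wr_top U X x0))"

definition filt_wr :: "'u topology \<Rightarrow> 'x topology \<Rightarrow> 'x \<Rightarrow> 'y topology \<Rightarrow> 'y \<Rightarrow> nat \<Rightarrow>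
    (('u \<Rightarrow> 'x \<Rightarrow> 'y) \<Rightarrow>\<^sub>0 int) set" where
  "filt_wr U X x0 Y y0 s = {V \<in> free_on (unbased_maps U (CO X x0 Y y0)).
      frag_extend (\<lambda>w. frag_of (sharp U X x0 y0 w)) V \<in> filt (wr_top U X x0) None Y y0 s}"

definition approx_r :: "'x topology \<Rightarrow> 'x \<Rightarrow> 'y topology \<Rightarrow> 'y \<Rightarrow> nat \<Rightarrow> ('x \<Rightarrow> 'y) \<Rightarrow> ('x \<Rightarrow> 'y) \<Rightarrow> bool" where
  "approx_r X x0 Y y0 r a b \<longleftrightarrow>
    (let a' = restrict a (topspace X); b' = restrict b (topspace X); M = CO X x0 Y y0 in
     \<forall>E::nat set. finite E \<and> E \<noteq> {} \<longrightarrow>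
       (\<exists>S. S \<in> free_on (unbased_maps (dsimplex_top E) (subtopology M (path_component_of_set M a'))) \<and>
            fissile E S \<and>
            frag_of (restrict (\<lambda>_. b') (dsimplex E)) - S \<in> filt_wr (dsimplex_top E) X x0 Y y0 (Suc r)))"

end

theory Submission
  imports Defs
begin

text \<open>Precomposition with \<open>k\<close> and postcomposition with \<open>h\<close> induce continuous maps
  \<open>\<psi>\<close> between the compact-open mapping spaces, taking \<open>a\<close>, \<open>b\<close> to \<open>a \<circ> k\<close>, \<open>b \<circ> k\<close>
  resp. \<open>h \<circ> a\<close>, \<open>h \<circ> b\<close>. Pushing a witness \<open>S\<close> of \<open>a \<approx>\<^sub>r b\<close> forward along \<open>\<psi>\<close>
  yields a witness for the images: it lies in the path component of \<open>\<psi> a\<close>; it is fissile,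
  because pushing forward commutes with restriction to faces and with the combining product;
  and it satisfies the filtration condition, because on \<open>U \<wr> X\<close> the map \<open>\<psi>\<close> acts by
  postcomposition with \<open>h\<close>, resp. precomposition with the based map \<open>U \<wr> k\<close>, so the
  restriction of a pushed-forward map to a finite set \<open>R'\<close> is determined by the restriction
  of the original map to a set of at most the same size (\<open>R'\<close> itself, resp. its image).\<close>

lemma frag_cmul_sum_left:
  "finite I \<Longrightarrow> frag_cmul (\<Sum>i\<in>I. f i) x = (\<Sum>i\<in>I. frag_cmul (f i) x)"
  by (induction I rule: finite_induct) (simp_all add: frag_cmul_distrib)

lemma lookup_frag_extend_frag_of:
  "poly_mapping.lookup (frag_extend (\<lambda>x. frag_of (q x)) c) y
     = (\<Sum>x\<in>{x\<in>Poly_Mapping.keys c. q x = y}. poly_mapping.lookup c x)"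
  unfolding frag_extend_def lookup_sum
  by (simp add: sum.inter_filter if_distrib eq_commute cong: if_cong)

lemma comb_prod_eq_sum_PiE:
  assumes "finite A" "\<And>F. F \<in> A \<Longrightarrow> Poly_Mapping.keys (c F) \<subseteq> K F" "\<And>F. F \<in> A \<Longrightarrow> finite (K F)"
  shows "comb_prod A c
    = (\<Sum>g\<in>PiE A K. frag_cmul (\<Prod>F\<in>A. poly_mapping.lookup (c F) (g F)) (frag_of (glue A g)))"
  unfolding comb_prod_def
proof (rule sum.mono_neutral_left)
  show "finite (PiE A K)" using assms by (simp add: finite_PiE)
  show "PiE A (\<lambda>F. Poly_Mapping.keys (c F)) \<subseteq> PiE A K" using assms(2) by (rule PiE_mono)
  show "\<forall>g\<in>PiE A K - PiE A (\<lambda>F. Poly_Mapping.keys (c F)).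
     frag_cmul (\<Prod>F\<in>A. poly_mapping.lookup (c F) (g F)) (frag_of (glue A g)) = 0"
  proof
    fix g assume "g \<in> PiE A K - PiE A (\<lambda>F. Poly_Mapping.keys (c F))"
    then obtain F where "F \<in> A" "g F \<notin> Poly_Mapping.keys (c F)"
      by (auto simp: PiE_iff)
    then have "(\<Prod>F\<in>A. poly_mapping.lookup (c F) (g F)) = 0"
      using assms(1) by (metis (mono_tags, lifting) in_keys_iff prod_zero)
    then show "frag_cmul (\<Prod>F\<in>A. poly_mapping.lookup (c F) (g F)) (frag_of (glue A g)) = 0"
      by simp
  qed
qed

lemma comb_prod_cong: "(\<And>F. F \<in> A \<Longrightarrow> c F = c' F) \<Longrightarrow> comb_prod A c = comb_prod A c'"
  unfolding comb_prod_def
  by (rule sum.cong) (auto intro!: PiE_cong prod.cong simp: PiE_iff)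

text \<open>Multilinearity: expanding the product of the pushed-forward factors and regrouping
  the terms by the fibres of \<open>g \<mapsto> (\<lambda>F. q F (g F))\<close>.\<close>
lemma comb_prod_frag_extend:
  assumes fin: "finite A"
    and glue: "\<And>g h. (\<forall>F\<in>A. h F = q F (g F)) \<Longrightarrow> glue A h = Q (glue A g)"
  shows "comb_prod A (\<lambda>F. frag_extend (\<lambda>x. frag_of (q F x)) (c F))
       = frag_extend (\<lambda>x. frag_of (Q x)) (comb_prod A c)"
proof -
  define K where "K F = Poly_Mapping.keys (c F)" for F
  define d where "d F = frag_extend (\<lambda>x. frag_of (q F x)) (c F)" for F
  define K' where "K' F = q F ` K F" for F
  define B where "B h F = {x\<in>K F. q F x = h F}" for h F
  define m where "m F x = poly_mapping.lookup (c F) x" for F x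
  define \<phi> where "\<phi> g = restrict (\<lambda>F. q F (g F)) A" for g
  have finK: "finite (K F)" for F by (simp add: K_def)
  have finB: "finite (PiE A (B h))" for h
    using fin finK by (simp add: B_def finite_PiE)
  have keys_d: "Poly_Mapping.keys (d F) \<subseteq> K' F" for F
    unfolding d_def K'_def K_def using keys_frag_extend by fastforce
  have fibre: "{g\<in>PiE A K. \<phi> g = h} = PiE A (B h)" if "h \<in> PiE A K'" for h
    using that unfolding B_def \<phi>_def
    by (auto simp: PiE_iff extensional_def restrict_def fun_eq_iff)
  have "comb_prod A d
      = (\<Sum>h\<in>PiE A K'. frag_cmul (\<Prod>F\<in>A. poly_mapping.lookup (d F) (h F)) (frag_of (glue A h)))"
    by (rule comb_prod_eq_sum_PiE) (use fin keys_d finK K'_def in auto)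
  also have "\<dots> = (\<Sum>h\<in>PiE A K'. \<Sum>g\<in>PiE A (B h).
      frag_cmul (\<Prod>F\<in>A. m F (g F)) (frag_of (glue A h)))"
  proof (rule sum.cong[OF refl])
    fix h
    have "(\<Prod>F\<in>A. poly_mapping.lookup (d F) (h F)) = (\<Prod>F\<in>A. \<Sum>x\<in>B h F. m F x)"
      unfolding d_def lookup_frag_extend_frag_of B_def m_def K_def by simp
    also have "\<dots> = (\<Sum>g\<in>PiE A (B h). \<Prod>F\<in>A. m F (g F))"
      by (rule prod_sum_PiE) (use fin finK B_def in auto)
    finally show "frag_cmul (\<Prod>F\<in>A. poly_mapping.lookup (d F) (h F)) (frag_of (glue A h))
        = (\<Sum>g\<in>PiE A (B h). frag_cmul (\<Prod>F\<in>A. m F (g F)) (frag_of (glue A h)))"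
      by (simp add: frag_cmul_sum_left finB)
  qed
  also have "\<dots> = (\<Sum>h\<in>PiE A K'. \<Sum>g\<in>{g\<in>PiE A K. \<phi> g = h}.
      frag_cmul (\<Prod>F\<in>A. m F (g F)) (frag_of (Q (glue A g))))"
  proof (rule sum.cong[OF refl])
    fix h assume h: "h \<in> PiE A K'"
    show "(\<Sum>g\<in>PiE A (B h). frag_cmul (\<Prod>F\<in>A. m F (g F)) (frag_of (glue A h)))
        = (\<Sum>g\<in>{g\<in>PiE A K. \<phi> g = h}. frag_cmul (\<Prod>F\<in>A. m F (g F)) (frag_of (Q (glue A g))))"
      unfolding fibre[OF h]
    proof (rule sum.cong[OF refl])
      fix g assume "g \<in> PiE A (B h)"
      then have "glue A h = Q (glue A g)" by (intro glue) (auto simp: B_def PiE_iff)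
      then show "frag_cmul (\<Prod>F\<in>A. m F (g F)) (frag_of (glue A h))
          = frag_cmul (\<Prod>F\<in>A. m F (g F)) (frag_of (Q (glue A g)))" by simp
    qed
  qed
  also have "\<dots> = (\<Sum>g\<in>PiE A K. frag_cmul (\<Prod>F\<in>A. m F (g F)) (frag_of (Q (glue A g))))"
    by (rule sum.group) (use fin finK K'_def \<phi>_def in \<open>auto simp: finite_PiE PiE_iff\<close>)
  also have "\<dots> = frag_extend (\<lambda>x. frag_of (Q x)) (comb_prod A c)"
    unfolding comb_prod_def K_def m_def
    by (subst frag_extend_sum) (auto simp: finite_PiE frag_extend_cmul fin)
  finally show ?thesis unfolding d_def .
qed

definition postcomp :: "('a \<Rightarrow> 'b) \<Rightarrow> 't set \<Rightarrow> ('t \<Rightarrow> 'a) \<Rightarrow> 't \<Rightarrow> 'b" where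
  "postcomp \<psi> D w = restrict (\<lambda>t. \<psi> (w t)) D"

definition postcomp_chain ::
    "('a \<Rightarrow> 'b) \<Rightarrow> 't set \<Rightarrow> (('t \<Rightarrow> 'a) \<Rightarrow>\<^sub>0 int) \<Rightarrow> (('t \<Rightarrow> 'b) \<Rightarrow>\<^sub>0 int)" where
  "postcomp_chain \<psi> D V = frag_extend (\<lambda>w. frag_of (postcomp \<psi> D w)) V"

lemma keys_postcomp_chain:
  "Poly_Mapping.keys (postcomp_chain \<psi> D V) \<subseteq> postcomp \<psi> D ` Poly_Mapping.keys V"
  unfolding postcomp_chain_def using keys_frag_extend by fastforce

lemma restr_frag_postcomp_chain:
  assumes "R \<subseteq> D"
  shows "restr_frag R (postcomp_chain \<psi> D V) = postcomp_chain \<psi> R V"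
proof -
  have "restrict (postcomp \<psi> D w) R = postcomp \<psi> R w" for w
    using assms by (auto simp: postcomp_def fun_eq_iff)
  then show ?thesis
    unfolding restr_frag_def postcomp_chain_def
    by (simp add: frag_extend_compose[of _ "postcomp \<psi> D", unfolded o_def])
qed

lemma postcomp_chain_restr_frag: "postcomp_chain \<psi> R (restr_frag R V) = postcomp_chain \<psi> R V"
proof -
  have "postcomp \<psi> R (restrict w R) = postcomp \<psi> R w" for w
    by (auto simp: postcomp_def fun_eq_iff)
  then show ?thesis
    unfolding restr_frag_def postcomp_chain_def
    by (simp add: frag_extend_compose[of _ "\<lambda>f. restrict f R", unfolded o_def])
qed

lemma postcomp_chain_in_free_on_unbased_maps:
  assumes "V \<in> free_on (unbased_maps U M)" and "continuous_map M M' \<psi>"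
  shows "postcomp_chain \<psi> (topspace U) V \<in> free_on (unbased_maps U M')"
  unfolding free_on_def
proof
  show "Poly_Mapping.keys (postcomp_chain \<psi> (topspace U) V) \<subseteq> unbased_maps U M'"
  proof
    fix w' assume "w' \<in> Poly_Mapping.keys (postcomp_chain \<psi> (topspace U) V)"
    then obtain w where w: "w \<in> Poly_Mapping.keys V" "w' = postcomp \<psi> (topspace U) w"
      using keys_postcomp_chain by blast
    then have "continuous_map U M w" using assms(1) by (auto simp: free_on_def unbased_maps_def)
    then have "continuous_map U M' (\<psi> \<circ> w)" using assms(2) by (rule continuous_map_compose)
    then have "continuous_map U M' w'" by (rule continuous_map_eq) (simp add: w postcomp_def)
    then show "w' \<in> unbased_maps U M'" by (simp add: unbased_maps_def w postcomp_def)
  qed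
qed

lemma dsimplex_mono: "F \<subseteq> E \<Longrightarrow> finite E \<Longrightarrow> dsimplex F \<subseteq> dsimplex E"
proof
  fix t assume FE: "F \<subseteq> E" "finite E" and t: "t \<in> dsimplex F"
  have "sum t E = sum t F"
    by (rule sum.mono_neutral_right) (use FE t in \<open>auto simp: dsimplex_def\<close>)
  then show "t \<in> dsimplex E" using t FE by (auto simp: dsimplex_def)
qed

lemma disjnt_dsimplex: "disjnt F G \<Longrightarrow> disjnt (dsimplex F) (dsimplex G)"
proof (rule ccontr)
  assume d: "disjnt F G" and "\<not> disjnt (dsimplex F) (dsimplex G)"
  then obtain t where t: "t \<in> dsimplex F" "t \<in> dsimplex G" by (auto simp: disjnt_def)
  have "\<forall>i\<in>F. t i = 0" using t d by (auto simp: dsimplex_def disjnt_def)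
  then have "sum t F = 0" by simp
  then show False using t by (simp add: dsimplex_def)
qed

lemma dsimplex_nonempty: "finite E \<Longrightarrow> E \<noteq> {} \<Longrightarrow> dsimplex E \<noteq> {}"
proof -
  assume "finite E" "E \<noteq> {}"
  then obtain e where e: "e \<in> E" by blast
  have "(\<lambda>i. if i = e then 1 else 0::real) \<in> dsimplex E"
    using e \<open>finite E\<close> by (auto simp: dsimplex_def)
  then show ?thesis by blast
qed

lemma layout_space_subset_dsimplex: "layout E A \<Longrightarrow> finite E \<Longrightarrow> layout_space A \<subseteq> dsimplex E"
  unfolding layout_space_def layout_def using dsimplex_mono by blast

lemma glue_postcomp:
  assumes "layout E A" and "\<forall>F\<in>A. h F = postcomp \<psi> (dsimplex F) (g F)"
  shows "glue A h = postcomp \<psi> (layout_space A) (glue A g)"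
proof
  fix t
  show "glue A h t = postcomp \<psi> (layout_space A) (glue A g) t"
  proof (cases "\<exists>F\<in>A. t \<in> dsimplex F")
    case True
    then obtain F0 where F0: "F0 \<in> A" "t \<in> dsimplex F0" by blast
    have "(THE F. F \<in> A \<and> t \<in> dsimplex F) = F0"
    proof (rule the_equality)
      fix F assume "F \<in> A \<and> t \<in> dsimplex F"
      then show "F = F0" using F0 assms(1) disjnt_dsimplex unfolding layout_def pairwise_def
        by (metis disjnt_iff)
    qed (use F0 in auto)
    then show ?thesis using True F0 assms(2) unfolding glue_def postcomp_def layout_space_def by auto
  next
    case False
    then show ?thesis unfolding glue_def postcomp_def layout_space_def by auto
  qed
qed

lemma fissile_postcomp_chain:
  assumes "fissile E S" "finite E"
  shows "fissile E (postcomp_chain \<psi> (dsimplex E) S)"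
  unfolding fissile_def
proof (intro allI impI)
  fix A assume A: "layout E A"
  have "finite A" using A assms(2) unfolding layout_def by (meson finite_Pow_iff finite_subset)
  have faces: "dsimplex F \<subseteq> dsimplex E" if "F \<in> A" for F
    using A that assms(2) dsimplex_mono unfolding layout_def by blast
  have "restr_frag (layout_space A) (postcomp_chain \<psi> (dsimplex E) S)
      = postcomp_chain \<psi> (layout_space A) (restr_frag (layout_space A) S)"
    by (simp add: restr_frag_postcomp_chain layout_space_subset_dsimplex[OF A assms(2)]
        postcomp_chain_restr_frag)
  also have "\<dots> = postcomp_chain \<psi> (layout_space A) (comb_prod A (\<lambda>F. restr_frag (dsimplex F) S))"
    using assms(1) A unfolding fissile_def by simp
  also have "\<dots> = comb_prod A (\<lambda>F. postcomp_chain \<psi> (dsimplex F) (restr_frag (dsimplex F) S))"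
    unfolding postcomp_chain_def
    by (rule comb_prod_frag_extend[symmetric, OF \<open>finite A\<close>]) (rule glue_postcomp[OF A], auto)
  also have "\<dots> = comb_prod A (\<lambda>F. restr_frag (dsimplex F) (postcomp_chain \<psi> (dsimplex E) S))"
    by (rule comb_prod_cong) (simp add: postcomp_chain_restr_frag restr_frag_postcomp_chain faces)
  finally show "restr_frag (layout_space A) (postcomp_chain \<psi> (dsimplex E) S) =
    comb_prod A (\<lambda>F. restr_frag (dsimplex F) (postcomp_chain \<psi> (dsimplex E) S))" .
qed

lemma topspace_CO [simp]: "topspace (CO X x0 Y y0) = based_maps X x0 Y y0"
proof -
  have "UNIV \<in> {{f. f ` K \<subseteq> U} | K U. compactin X K \<and> openin Y U}"
    by (rule CollectI, rule exI[of _ "{}"], rule exI[of _ "topspace Y"]) auto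
  then show ?thesis unfolding CO_def by auto
qed

lemma openin_CO_subbasic:
  assumes "compactin X K" "openin Y U"
  shows "openin (CO X x0 Y y0) {f \<in> based_maps X x0 Y y0. f ` K \<subseteq> U}"
  unfolding CO_def openin_subtopology
  by (rule exI[of _ "{f. f ` K \<subseteq> U}"]) (use assms in \<open>auto intro!: topology_generated_by_Basis\<close>)

lemma continuous_map_into_CO:
  assumes "\<And>f. f \<in> based_maps X x0 Y y0 \<Longrightarrow> \<psi> f \<in> based_maps X' x0' Y' y0'"
    and "\<And>K U. compactin X' K \<Longrightarrow> openin Y' U \<Longrightarrow>
          openin (CO X x0 Y y0) {f \<in> based_maps X x0 Y y0. \<psi> f ` K \<subseteq> U}"
  shows "continuous_map (CO X x0 Y y0) (CO X' x0' Y' y0') \<psi>"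
proof -
  let ?B = "{{f. f ` K \<subseteq> U} | K U. compactin X' K \<and> openin Y' U}"
  have "continuous_map (CO X x0 Y y0) (topology_generated_by ?B) \<psi>"
  proof (rule continuous_on_generated_topo)
    fix V assume "V \<in> ?B"
    then obtain K U where KU: "V = {f. f ` K \<subseteq> U}" "compactin X' K" "openin Y' U" by blast
    then have "\<psi> -` V \<inter> topspace (CO X x0 Y y0) = {f \<in> based_maps X x0 Y y0. \<psi> f ` K \<subseteq> U}"
      by auto
    then show "openin (CO X x0 Y y0) (\<psi> -` V \<inter> topspace (CO X x0 Y y0))" using assms(2) KU by simp
  next
    have "UNIV \<in> ?B"
      by (rule CollectI, rule exI[of _ "{}"], rule exI[of _ "topspace Y'"]) auto
    then show "\<psi> ` topspace (CO X x0 Y y0) \<subseteq> \<Union> ?B" by blast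
  qed
  then show ?thesis
    unfolding CO_def[of X' x0' Y' y0'] using assms(1)
    by (auto simp: continuous_map_in_subtopology)
qed

lemma based_maps_postcompose:
  assumes "f \<in> based_maps X x0 Y y0" "continuous_map Y Y' h" "h y0 = y0'" "x0 \<in> topspace X"
  shows "restrict (h \<circ> f) (topspace X) \<in> based_maps X x0 Y' y0'"
proof -
  have "continuous_map X Y' (h \<circ> f)"
    using assms(1,2) by (auto simp: based_maps_def intro: continuous_map_compose)
  then have "continuous_map X Y' (restrict (h \<circ> f) (topspace X))" by (rule continuous_map_eq) auto
  then show ?thesis using assms by (auto simp: based_maps_def)
qed

lemma based_maps_precompose:
  assumes "f \<in> based_maps X x0 Y y0" "continuous_map X' X k" "k x0' = x0" "x0' \<in> topspace X'"
  shows "restrict (f \<circ> k) (topspace X') \<in> based_maps X' x0' Y y0"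
proof -
  have "continuous_map X' Y (f \<circ> k)"
    using assms(1,2) by (auto simp: based_maps_def intro: continuous_map_compose)
  then have "continuous_map X' Y (restrict (f \<circ> k) (topspace X'))" by (rule continuous_map_eq) auto
  then show ?thesis using assms by (auto simp: based_maps_def)
qed

lemma continuous_map_CO_postcompose:
  assumes h: "continuous_map Y Y' h" "h y0 = y0'" and x0: "x0 \<in> topspace X"
  shows "continuous_map (CO X x0 Y y0) (CO X x0 Y' y0') (\<lambda>f. restrict (h \<circ> f) (topspace X))"
proof (rule continuous_map_into_CO)
  show "restrict (h \<circ> f) (topspace X) \<in> based_maps X x0 Y' y0'" if "f \<in> based_maps X x0 Y y0" for f
    using based_maps_postcompose[OF that h x0] .
next
  fix K U assume KU: "compactin X K" "openin Y' U"
  have "f ` K \<subseteq> topspace Y" if "f \<in> based_maps X x0 Y y0" for f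
    using that compactin_subset_topspace[OF KU(1)]
    by (auto simp: based_maps_def dest!: continuous_map_image_subset_topspace)
  with compactin_subset_topspace[OF KU(1)]
  have "{f \<in> based_maps X x0 Y y0. restrict (h \<circ> f) (topspace X) ` K \<subseteq> U}
      = {f \<in> based_maps X x0 Y y0. f ` K \<subseteq> {y \<in> topspace Y. h y \<in> U}}"
    by (auto simp: subset_iff)
  moreover have "openin Y {y \<in> topspace Y. h y \<in> U}"
    using openin_continuous_map_preimage[OF h(1) KU(2)] .
  ultimately show "openin (CO X x0 Y y0)
      {f \<in> based_maps X x0 Y y0. restrict (h \<circ> f) (topspace X) ` K \<subseteq> U}"
    using openin_CO_subbasic[OF KU(1)] by simp
qed

lemma continuous_map_CO_precompose:
  assumes k: "continuous_map X' X k" "k x0' = x0" and x0': "x0' \<in> topspace X'"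
  shows "continuous_map (CO X x0 Y y0) (CO X' x0' Y y0) (\<lambda>f. restrict (f \<circ> k) (topspace X'))"
proof (rule continuous_map_into_CO)
  show "restrict (f \<circ> k) (topspace X') \<in> based_maps X' x0' Y y0" if "f \<in> based_maps X x0 Y y0" for f
    using based_maps_precompose[OF that k x0'] .
next
  fix K U assume KU: "compactin X' K" "openin Y U"
  have "{f \<in> based_maps X x0 Y y0. restrict (f \<circ> k) (topspace X') ` K \<subseteq> U}
      = {f \<in> based_maps X x0 Y y0. f ` (k ` K) \<subseteq> U}"
    using compactin_subset_topspace[OF KU(1)] by auto
  moreover have "compactin X (k ` K)" using image_compactin[OF KU(1) k(1)] .
  ultimately show "openin (CO X x0 Y y0)
      {f \<in> based_maps X x0 Y y0. restrict (f \<circ> k) (topspace X') ` K \<subseteq> U}"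
    using openin_CO_subbasic[OF _ KU(2)] by simp
qed

lemma continuous_map_path_component_of_set:
  assumes "continuous_map M M' \<psi>"
  shows "continuous_map (subtopology M (path_component_of_set M a))
           (subtopology M' (path_component_of_set M' (\<psi> a))) \<psi>"
proof -
  have "path_component_of M' (\<psi> a) (\<psi> x)" if x: "path_component_of M a x" for x
  proof -
    obtain g where "pathin M g" "g 0 = a" "g 1 = x"
      using x unfolding path_component_of_def by blast
    then show ?thesis unfolding path_component_of_def
      by (intro exI[of _ "\<psi> \<circ> g"]) (auto intro: pathin_compose assms)
  qed
  then show ?thesis using assms
    by (auto simp: continuous_map_in_subtopology continuous_map_from_subtopology)
qed

lemma topspace_dsimplex_top [simp]: "topspace (dsimplex_top E) = dsimplex E"
  by (simp add: dsimplex_top_def RN_def)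

lemma approx_r_transfer:
  assumes cont: "continuous_map (CO X x0 Y y0) (CO X' x0' Y' y0') \<psi>"
    and filt: "\<And>E V. finite E \<Longrightarrow> E \<noteq> {} \<Longrightarrow> V \<in> filt_wr (dsimplex_top E) X x0 Y y0 (Suc r) \<Longrightarrow>
        postcomp_chain \<psi> (dsimplex E) V \<in> filt_wr (dsimplex_top E) X' x0' Y' y0' (Suc r)"
    and a: "\<psi> (restrict a (topspace X)) = restrict a' (topspace X')"
    and b: "\<psi> (restrict b (topspace X)) = restrict b' (topspace X')"
    and "approx_r X x0 Y y0 r a b"
  shows "approx_r X' x0' Y' y0' r a' b'"
  unfolding approx_r_def Let_def
proof (intro allI impI)
  let ?M = "CO X x0 Y y0" and ?M' = "CO X' x0' Y' y0'"
  let ?a = "restrict a (topspace X)" and ?a' = "restrict a' (topspace X')"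
  let ?b = "restrict b (topspace X)" and ?b' = "restrict b' (topspace X')"
  fix E :: "nat set" assume E: "finite E \<and> E \<noteq> {}"
  obtain S where S_free: "S \<in> free_on (unbased_maps (dsimplex_top E)
        (subtopology ?M (path_component_of_set ?M ?a)))"
    and S_fissile: "fissile E S"
    and S_filt: "frag_of (restrict (\<lambda>_. ?b) (dsimplex E)) - S \<in> filt_wr (dsimplex_top E) X x0 Y y0 (Suc r)"
    using assms(5) E unfolding approx_r_def Let_def by blast
  define S' where "S' = postcomp_chain \<psi> (dsimplex E) S"
  have "S' \<in> free_on (unbased_maps (dsimplex_top E) (subtopology ?M' (path_component_of_set ?M' ?a')))"
    unfolding S'_def
    using postcomp_chain_in_free_on_unbased_maps[OF S_free continuous_map_path_component_of_set[OF cont]]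
    by (simp add: a)
  moreover have "fissile E S'"
    unfolding S'_def using fissile_postcomp_chain S_fissile E by blast
  moreover have "postcomp \<psi> (dsimplex E) (restrict (\<lambda>_. ?b) (dsimplex E)) = restrict (\<lambda>_. ?b') (dsimplex E)"
    unfolding postcomp_def by (rule restrict_ext) (simp add: b)
  then have "frag_of (restrict (\<lambda>_. ?b') (dsimplex E)) - S'
      = postcomp_chain \<psi> (dsimplex E) (frag_of (restrict (\<lambda>_. ?b) (dsimplex E)) - S)"
    unfolding S'_def postcomp_chain_def frag_extend_diff by simp
  then have "frag_of (restrict (\<lambda>_. ?b') (dsimplex E)) - S' \<in> filt_wr (dsimplex_top E) X' x0' Y' y0' (Suc r)"
    using filt[OF _ _ S_filt] E by simp
  ultimately show "\<exists>S. S \<in> free_on (unbased_maps (dsimplex_top E)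
        (subtopology ?M' (path_component_of_set ?M' ?a'))) \<and> fissile E S \<and>
       frag_of (restrict (\<lambda>_. ?b') (dsimplex E)) - S \<in> filt_wr (dsimplex_top E) X' x0' Y' y0' (Suc r)"
    by blast
qed

lemma istopology_quot_top:
  "istopology (\<lambda>S. S \<subseteq> q ` topspace X \<and> openin X {x \<in> topspace X. q x \<in> S})"
  unfolding istopology_def
proof (rule conjI; intro allI impI)
  fix S T assume "S \<subseteq> q ` topspace X \<and> openin X {x \<in> topspace X. q x \<in> S}"
     "T \<subseteq> q ` topspace X \<and> openin X {x \<in> topspace X. q x \<in> T}"
  moreover have "{x \<in> topspace X. q x \<in> S \<inter> T}
      = {x \<in> topspace X. q x \<in> S} \<inter> {x \<in> topspace X. q x \<in> T}" by auto
  ultimately show "S \<inter> T \<subseteq> q ` topspace X \<and> openin X {x \<in> topspace X. q x \<in> S \<inter> T}" by auto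
next
  fix K assume "\<forall>S\<in>K. S \<subseteq> q ` topspace X \<and> openin X {x \<in> topspace X. q x \<in> S}"
  moreover have "{x \<in> topspace X. q x \<in> \<Union>K} = (\<Union>S\<in>K. {x \<in> topspace X. q x \<in> S})" by auto
  ultimately show "\<Union>K \<subseteq> q ` topspace X \<and> openin X {x \<in> topspace X. q x \<in> \<Union>K}" by auto
qed

lemma openin_quot_top:
  "openin (quot_top X q) S \<longleftrightarrow> S \<subseteq> q ` topspace X \<and> openin X {x \<in> topspace X. q x \<in> S}"
  unfolding quot_top_def topology_inverse'[OF istopology_quot_top] by simp

lemma topspace_quot_top [simp]: "topspace (quot_top X q) = q ` topspace X"
proof -
  have "{x \<in> topspace X. q x \<in> q ` topspace X} = topspace X" by auto
  then have "openin (quot_top X q) (q ` topspace X)" by (auto simp: openin_quot_top)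
  moreover have "\<And>S. openin (quot_top X q) S \<Longrightarrow> S \<subseteq> q ` topspace X" by (simp add: openin_quot_top)
  ultimately show ?thesis unfolding topspace_def by blast
qed

lemma continuous_map_quot_top: "continuous_map X (quot_top X q) q"
  unfolding continuous_map_def by (auto simp: openin_quot_top)

lemma continuous_map_from_quot_top:
  assumes "continuous_map X Z (g \<circ> q)"
  shows "continuous_map (quot_top X q) Z g"
  unfolding continuous_map_def
proof (intro conjI allI impI)
  show "g \<in> topspace (quot_top X q) \<rightarrow> topspace Z"
    using assms by (auto simp: continuous_map_def)
  fix S assume "openin Z S"
  moreover have "{x \<in> topspace X. q x \<in> {p \<in> topspace (quot_top X q). g p \<in> S}}
      = {x \<in> topspace X. (g \<circ> q) x \<in> S}" by auto
  ultimately show "openin (quot_top X q) {p \<in> topspace (quot_top X q). g p \<in> S}"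
    using openin_continuous_map_preimage[OF assms] by (simp add: openin_quot_top)
qed

lemma topspace_wr_top: "topspace (wr_top U X x0) = wr_pt x0 ` (topspace U \<times> topspace X)"
  by (simp add: wr_top_def)

lemma None_in_topspace_wr_top:
  assumes "topspace U \<noteq> {}" "x0 \<in> topspace X"
  shows "None \<in> topspace (wr_top U X x0)"
proof -
  obtain u where "u \<in> topspace U" using assms(1) by blast
  then show ?thesis unfolding topspace_wr_top using assms(2)
    by (auto simp: wr_pt_def intro!: image_eqI[of _ _ "(u, x0)"])
qed

lemma filt_frag_extend:
  assumes W: "W \<in> filt Z z0 Y y0 s"
    and based: "\<And>f. f \<in> based_maps Z z0 Y y0 \<Longrightarrow> G f \<in> based_maps Z' z0' Y' y0'"
    and locality: "\<And>R'. R' \<in> Fsets Z' z0' (s - 1) \<Longrightarrow>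
        \<exists>R \<in> Fsets Z z0 (s - 1). \<exists>\<Gamma>. \<forall>f. restrict (G f) R' = \<Gamma> (restrict f R)"
  shows "frag_extend (\<lambda>f. frag_of (G f)) W \<in> filt Z' z0' Y' y0' s"
  unfolding filt_def free_on_def
proof (intro CollectI conjI ballI)
  have "Poly_Mapping.keys W \<subseteq> based_maps Z z0 Y y0"
    using W by (simp add: filt_def free_on_def)
  then show "Poly_Mapping.keys (frag_extend (\<lambda>f. frag_of (G f)) W) \<subseteq> based_maps Z' z0' Y' y0'"
    using keys_frag_extend[of "\<lambda>f. frag_of (G f)" W] based by fastforce
next
  fix R' assume "R' \<in> Fsets Z' z0' (s - 1)"
  then obtain R \<Gamma> where R: "R \<in> Fsets Z z0 (s - 1)"
    and \<Gamma>: "\<And>f. restrict (G f) R' = \<Gamma> (restrict f R)" using locality by blast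
  have "restr_frag R' (frag_extend (\<lambda>f. frag_of (G f)) W) = frag_extend (\<lambda>f. frag_of (\<Gamma> (restrict f R))) W"
    unfolding restr_frag_def by (simp add: frag_extend_compose[of _ G, unfolded o_def] \<Gamma>)
  also have "\<dots> = frag_extend (\<lambda>g. frag_of (\<Gamma> g)) (restr_frag R W)"
    unfolding restr_frag_def by (simp add: frag_extend_compose[of _ "\<lambda>f. restrict f R", unfolded o_def])
  also have "\<dots> = 0" using W R by (simp add: filt_def)
  finally show "restr_frag R' (frag_extend (\<lambda>f. frag_of (G f)) W) = 0" .
qed

lemma filt_wr_postcomp_chain:
  assumes V: "V \<in> filt_wr U X x0 Y y0 s"
    and cont: "continuous_map (CO X x0 Y y0) (CO X' x0' Y' y0') \<psi>"
    and sharp: "\<And>w. w \<in> unbased_maps U (CO X x0 Y y0) \<Longrightarrow>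
       sharp U X' x0' y0' (postcomp \<psi> (topspace U) w) = G (sharp U X x0 y0 w)"
    and based: "\<And>f. f \<in> based_maps (wr_top U X x0) None Y y0 \<Longrightarrow>
       G f \<in> based_maps (wr_top U X' x0') None Y' y0'"
    and locality: "\<And>R'. R' \<in> Fsets (wr_top U X' x0') None (s - 1) \<Longrightarrow>
        \<exists>R \<in> Fsets (wr_top U X x0) None (s - 1). \<exists>\<Gamma>. \<forall>f. restrict (G f) R' = \<Gamma> (restrict f R)"
  shows "postcomp_chain \<psi> (topspace U) V \<in> filt_wr U X' x0' Y' y0' s"
proof -
  have V_free: "V \<in> free_on (unbased_maps U (CO X x0 Y y0))"
    and W: "frag_extend (\<lambda>w. frag_of (sharp U X x0 y0 w)) V \<in> filt (wr_top U X x0) None Y y0 s"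
    using V by (auto simp: filt_wr_def)
  have "frag_extend (\<lambda>w. frag_of (sharp U X' x0' y0' w)) (postcomp_chain \<psi> (topspace U) V)
      = frag_extend (\<lambda>w. frag_of (sharp U X' x0' y0' (postcomp \<psi> (topspace U) w))) V"
    unfolding postcomp_chain_def by (simp add: frag_extend_compose[of _ "postcomp \<psi> (topspace U)", unfolded o_def])
  also have "\<dots> = frag_extend (\<lambda>w. frag_of (G (sharp U X x0 y0 w))) V"
    by (rule frag_extend_eq) (use V_free sharp in \<open>auto simp: free_on_def\<close>)
  also have "\<dots> = frag_extend (\<lambda>f. frag_of (G f)) (frag_extend (\<lambda>w. frag_of (sharp U X x0 y0 w)) V)"
    by (simp add: frag_extend_compose[of _ "sharp U X x0 y0", unfolded o_def])
  finally show ?thesis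
    using filt_frag_extend[OF W based locality] postcomp_chain_in_free_on_unbased_maps[OF V_free cont]
    unfolding filt_wr_def by auto
qed

definition wr_map :: "'x \<Rightarrow> ('x' \<Rightarrow> 'x) \<Rightarrow> ('u \<times> 'x') option \<Rightarrow> ('u \<times> 'x) option" where
  "wr_map x0 k p = (case p of None \<Rightarrow> None | Some (u, x') \<Rightarrow> wr_pt x0 (u, k x'))"

lemma wr_map_wr_pt: "k x0' = x0 \<Longrightarrow> wr_map x0 k (wr_pt x0' (u, x')) = wr_pt x0 (u, k x')"
  by (simp add: wr_pt_def wr_map_def)

lemma continuous_map_wr_map:
  assumes k: "continuous_map X' X k" "k x0' = x0"
  shows "continuous_map (wr_top U X' x0') (wr_top U X x0) (wr_map x0 k)"
  unfolding wr_top_def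
proof (rule continuous_map_from_quot_top)
  have "continuous_map (prod_topology U X') (prod_topology U X) (\<lambda>z. (fst z, k (snd z)))"
    by (intro continuous_map_pairedI continuous_map_fst)
       (rule continuous_map_compose[OF continuous_map_snd k(1), unfolded o_def])
  then have "continuous_map (prod_topology U X') (quot_top (prod_topology U X) (wr_pt x0))
      (wr_pt x0 \<circ> (\<lambda>z. (fst z, k (snd z))))"
    using continuous_map_quot_top by (rule continuous_map_compose)
  then show "continuous_map (prod_topology U X') (quot_top (prod_topology U X) (wr_pt x0))
      (wr_map x0 k \<circ> wr_pt x0')"
    by (rule continuous_map_eq) (use k(2) in \<open>auto simp: wr_map_wr_pt\<close>)
qed

lemma sharp_postcomp_postcompose:
  assumes "h y0 = y0'"
  shows "sharp U X x0 y0' (postcomp (\<lambda>f. restrict (h \<circ> f) (topspace X)) (topspace U) w)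
       = restrict (h \<circ> sharp U X x0 y0 w) (topspace (wr_top U X x0))"
  unfolding sharp_def
proof (rule restrict_ext)
  fix p assume p: "p \<in> topspace (wr_top U X x0)"
  then obtain u x where "p = wr_pt x0 (u, x)" "u \<in> topspace U" "x \<in> topspace X"
    unfolding topspace_wr_top by auto
  then show "(case p of None \<Rightarrow> y0'
        | Some (u, x) \<Rightarrow> postcomp (\<lambda>f. restrict (h \<circ> f) (topspace X)) (topspace U) w u x)
      = (h \<circ> restrict (\<lambda>p. case p of None \<Rightarrow> y0 | Some (u, x) \<Rightarrow> w u x) (topspace (wr_top U X x0))) p"
    using p assms by (auto simp: wr_pt_def postcomp_def)
qed

lemma sharp_postcomp_precompose:
  assumes w: "w \<in> unbased_maps U (CO X x0 Y y0)"
    and k: "continuous_map X' X k" "k x0' = x0"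
    and None: "None \<in> topspace (wr_top U X x0)"
  shows "sharp U X' x0' y0 (postcomp (\<lambda>f. restrict (f \<circ> k) (topspace X')) (topspace U) w)
       = restrict (sharp U X x0 y0 w \<circ> wr_map x0 k) (topspace (wr_top U X' x0'))"
  unfolding sharp_def[of U X']
proof (rule restrict_ext)
  fix p assume "p \<in> topspace (wr_top U X' x0')"
  then obtain u x where p: "p = wr_pt x0' (u, x)" "u \<in> topspace U" "x \<in> topspace X'"
    unfolding topspace_wr_top by auto
  have kx: "k x \<in> topspace X" using k(1) p(3) by (simp add: continuous_map_def Pi_iff)
  have wu: "w u \<in> based_maps X x0 Y y0" using w p(2) by (auto simp: unbased_maps_def continuous_map_def)
  have wr_map_p: "wr_map x0 k p = wr_pt x0 (u, k x)" using p(1) k(2) by (simp add: wr_map_wr_pt)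
  have "wr_pt x0 (u, k x) \<in> topspace (wr_top U X x0)"
    using p(2) kx unfolding topspace_wr_top by blast
  then show "(case p of None \<Rightarrow> y0
        | Some (u, x) \<Rightarrow> postcomp (\<lambda>f. restrict (f \<circ> k) (topspace X')) (topspace U) w u x)
      = (sharp U X x0 y0 w \<circ> wr_map x0 k) p"
    using p wr_map_p wu kx None k(2)
    by (auto simp: wr_pt_def sharp_def postcomp_def based_maps_def)
qed

lemma filt_wr_postcompose:
  assumes h: "continuous_map Y Y' h" "h y0 = y0'"
    and x0: "x0 \<in> topspace X" and U: "topspace U \<noteq> {}"
    and V: "V \<in> filt_wr U X x0 Y y0 s"
  shows "postcomp_chain (\<lambda>f. restrict (h \<circ> f) (topspace X)) (topspace U) V \<in> filt_wr U X x0 Y' y0' s"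
proof (rule filt_wr_postcomp_chain[OF V continuous_map_CO_postcompose[OF h x0]])
  show "sharp U X x0 y0' (postcomp (\<lambda>f. restrict (h \<circ> f) (topspace X)) (topspace U) w)
      = restrict (h \<circ> sharp U X x0 y0 w) (topspace (wr_top U X x0))" for w
    using h(2) by (rule sharp_postcomp_postcompose)
  show "restrict (h \<circ> f) (topspace (wr_top U X x0)) \<in> based_maps (wr_top U X x0) None Y' y0'"
    if "f \<in> based_maps (wr_top U X x0) None Y y0" for f
    using based_maps_postcompose[OF that h None_in_topspace_wr_top[OF U x0]] .
  show "\<exists>R\<in>Fsets (wr_top U X x0) None (s - 1). \<exists>\<Gamma>. \<forall>f.
      restrict (restrict (h \<circ> f) (topspace (wr_top U X x0))) R' = \<Gamma> (restrict f R)"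
    if "R' \<in> Fsets (wr_top U X x0) None (s - 1)" for R'
    using that by (intro bexI[of _ R'] exI[of _ "\<lambda>g. restrict (h \<circ> g) R'"])
      (auto simp: Fsets_def restrict_def fun_eq_iff)
qed

lemma filt_wr_precompose:
  assumes k: "continuous_map X' X k" "k x0' = x0"
    and x0': "x0' \<in> topspace X'" and U: "topspace U \<noteq> {}"
    and V: "V \<in> filt_wr U X x0 Y y0 s"
  shows "postcomp_chain (\<lambda>f. restrict (f \<circ> k) (topspace X')) (topspace U) V \<in> filt_wr U X' x0' Y y0 s"
proof (rule filt_wr_postcomp_chain[OF V continuous_map_CO_precompose[OF k x0']])
  have x0: "x0 \<in> topspace X" using k x0' by (auto simp: continuous_map_def)
  have wr_k: "continuous_map (wr_top U X' x0') (wr_top U X x0) (wr_map x0 k)"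
    using k by (rule continuous_map_wr_map)
  show "sharp U X' x0' y0 (postcomp (\<lambda>f. restrict (f \<circ> k) (topspace X')) (topspace U) w)
      = restrict (sharp U X x0 y0 w \<circ> wr_map x0 k) (topspace (wr_top U X' x0'))"
    if "w \<in> unbased_maps U (CO X x0 Y y0)" for w
    using that k None_in_topspace_wr_top[OF U x0] by (rule sharp_postcomp_precompose)
  show "restrict (f \<circ> wr_map x0 k) (topspace (wr_top U X' x0')) \<in> based_maps (wr_top U X' x0') None Y y0"
    if "f \<in> based_maps (wr_top U X x0) None Y y0" for f
    using based_maps_precompose[OF that wr_k _ None_in_topspace_wr_top[OF U x0']]
    by (simp add: wr_map_def)
  show "\<exists>R\<in>Fsets (wr_top U X x0) None (s - 1). \<exists>\<Gamma>. \<forall>f.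
      restrict (restrict (f \<circ> wr_map x0 k) (topspace (wr_top U X' x0'))) R' = \<Gamma> (restrict f R)"
    if R': "R' \<in> Fsets (wr_top U X' x0') None (s - 1)" for R'
  proof (intro bexI[of _ "wr_map x0 k ` R'"] exI[of _ "\<lambda>g. restrict (g \<circ> wr_map x0 k) R'"] allI)
    show "wr_map x0 k ` R' \<in> Fsets (wr_top U X x0) None (s - 1)"
      using R' wr_k card_image_le[of R' "wr_map x0 k"] unfolding Fsets_def
      by (auto simp: continuous_map_def wr_map_def intro!: image_eqI[of None _ None])
  qed (use R' in \<open>auto simp: Fsets_def restrict_def fun_eq_iff\<close>)
qed

lemma approx_r_postcompose:
  assumes h: "continuous_map Y Y' h" "h y0 = y0'" and x0: "x0 \<in> topspace X"
    and "approx_r X x0 Y y0 r a b"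
  shows "approx_r X x0 Y' y0' r (h \<circ> a) (h \<circ> b)"
proof (rule approx_r_transfer[OF continuous_map_CO_postcompose[OF h x0] _ _ _ assms(4)])
  show "postcomp_chain (\<lambda>f. restrict (h \<circ> f) (topspace X)) (dsimplex E) V
      \<in> filt_wr (dsimplex_top E) X x0 Y' y0' (Suc r)"
    if "finite E" "E \<noteq> {}" "V \<in> filt_wr (dsimplex_top E) X x0 Y y0 (Suc r)" for E V
    using filt_wr_postcompose[OF h x0 _ that(3)] dsimplex_nonempty[OF that(1,2)] by simp
qed (auto intro: restrict_ext)

lemma approx_r_precompose:
  assumes k: "continuous_map X' X k" "k x0' = x0" and x0': "x0' \<in> topspace X'"
    and "approx_r X x0 Y y0 r a b"
  shows "approx_r X' x0' Y y0 r (a \<circ> k) (b \<circ> k)"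
proof (rule approx_r_transfer[OF continuous_map_CO_precompose[OF k x0'] _ _ _ assms(4)])
  show "postcomp_chain (\<lambda>f. restrict (f \<circ> k) (topspace X')) (dsimplex E) V
      \<in> filt_wr (dsimplex_top E) X' x0' Y y0 (Suc r)"
    if "finite E" "E \<noteq> {}" "V \<in> filt_wr (dsimplex_top E) X x0 Y y0 (Suc r)" for E V
    using filt_wr_precompose[OF k x0' _ that(3)] dsimplex_nonempty[OF that(1,2)] by simp
  have "k x \<in> topspace X" if "x \<in> topspace X'" for x
    using k(1) that by (auto simp: continuous_map_def)
  then show "restrict (restrict a (topspace X) \<circ> k) (topspace X') = restrict (a \<circ> k) (topspace X')"
    and "restrict (restrict b (topspace X) \<circ> k) (topspace X') = restrict (b \<circ> k) (topspace X')"
    by (auto intro: restrict_ext)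
qed

lemma cellular_space_basepoint: "cellular_space X x0 \<Longrightarrow> x0 \<in> topspace X"
  unfolding cellular_space_def cw_structure_def by blast

theorem corollary5p1:
  fixes X :: "'x topology" and Y :: "'y topology"
    and X' :: "'x2 topology" and Y' :: "'y2 topology"
    and r :: nat
  assumes "cellular_space X x0" and "cellular_space Y y0"
    and "cellular_space X' x0'" and "cellular_space Y' y0'"
    and "compact_space X" and "compact_space X'"
    and "continuous_map X' X k" and "k x0' = x0"
    and "continuous_map Y Y' h" and "h y0 = y0'"
    and "continuous_map X Y a" and "a x0 = y0"
    and "continuous_map X Y b" and "b x0 = y0"
    and "approx_r X x0 Y y0 r a b"
  shows "approx_r X' x0' Y y0 r (a \<circ> k) (b \<circ> k) \<and> approx_r X x0 Y' y0' r (h \<circ> a) (h \<circ> b)"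
proof
  show "approx_r X' x0' Y y0 r (a \<circ> k) (b \<circ> k)"
    using assms(7,8) cellular_space_basepoint[OF assms(3)] assms(15) by (rule approx_r_precompose)
  show "approx_r X x0 Y' y0' r (h \<circ> a) (h \<circ> b)"
    using assms(9,10) cellular_space_basepoint[OF assms(1)] assms(15) by (rule approx_r_postcompose)
qed

end
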